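(* Let $(\mathcal{C},\mathbb{E},\mathfrak{s})$ be an extriangulated category and $\mathbb{F}\subseteq\mathbb{E}$ an additive subfunctor. Let $K\to P\xrightarrow{p}C\overset{\gamma}{\dashrightarrow}$ be an $\mathbb{E}$-triangle with $p$ an $\mathbb{E}$-projective morphism, and let $\varphi:X\to C$ be a morphism. Then $\varphi$ is an $\mathbb{F}$-phantom morphism if and only if $\varphi^\star\gamma\in\mathbb{F}(X,K)$, i.e. the $\mathbb{E}$-triangle $K\to Y\to X\overset{\varphi^\star\gamma}{\dashrightarrow}$ realizing $\varphi^\star\gamma$ is an $\mathbb{F}$-triangle.
   Context: An extriangulated category $(\mathcal{C},\mathbb{E},\mathfrak{s})$ in the sense of Nakaoka–Palu consists of an additive category $\mathcal{C}$, a biadditive functor $\mathbb{E}:\mathcal{C}^{\mathrm{op}}\times\mathcal{C}\to\mathrm{Ab}$ and an additive realization $\mathfrak{s}$ assigning to each $\delta\in\mathbb{E}(C,A)$ an equivalence class of sequences $A\to B\to C$ (an $\mathbb{E}$-triangle $A\to B\to C\overset{\delta}{\dashrightarrow}$), satisfying axioms (ET1)–(ET4) and (ET3)$^{\mathrm{op}}$, (ET4)$^{\mathrm{op}}$. For $\delta\in\mathbb{E}(C,A)$, $a:A\to A'$, $c:C'\to C$: $a_\star\delta=\mathbb{E}(C,a)(\delta)$, $c^\star\delta=\mathbb{E}(c,A)(\delta)$. An additive subfunctor $\mathbb{F}\subseteq\mathbb{E}$: subgroups $\mathbb{F}(C,A)\subseteq\mathbb{E}(C,A)$ stable under $a_\star,c^\star$;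 an $\mathbb{F}$-triangle is an $\mathbb{E}$-triangle whose extension lies in $\mathbb{F}$. $\varphi:X\to C$ is $\mathbb{F}$-phantom if $\varphi^\star\delta\in\mathbb{F}(X,A)$ for every $A$ and every $\delta\in\mathbb{E}(C,A)$. A morphism $p:P\to C$ is $\mathbb{E}$-projective if $p^\star\delta=0$ for every $\delta\in\mathbb{E}(C,A)$ and every $A$. *)

theory Defs
  imports "HOL-Algebra.Group"
begin

text \<open>
  An extriangulated category is encoded as a record:
  objects 'o, morphisms 'm, extension elements 'e.
  hom X Y is the hom-set, cmp g f is the composite g o f, idm X the identity,
  madd the addition of morphisms (abelian group on each hom set, zero mzero X Y).
  ext C A is the group E(C,A) (addition eadd, zero ezero C A).
  push a d is the pushforward a_star d, pull c d is the pullback c^star d.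
  real C A d B x y means that the sequence A -x-> B -y-> C lies in the
  equivalence class s(d) assigned by the realization s.
\<close>

record ('o, 'm, 'e) extri =
  ob    :: "'o set"
  hom   :: "'o \<Rightarrow> 'o \<Rightarrow> 'm set"
  cmp   :: "'m \<Rightarrow> 'm \<Rightarrow> 'm"
  idm   :: "'o \<Rightarrow> 'm"
  madd  :: "'m \<Rightarrow> 'm \<Rightarrow> 'm"
  mzero :: "'o \<Rightarrow> 'o \<Rightarrow> 'm"
  ext   :: "'o \<Rightarrow> 'o \<Rightarrow> 'e set"
  eadd  :: "'e \<Rightarrow> 'e \<Rightarrow> 'e"
  ezero :: "'o \<Rightarrow> 'o \<Rightarrow> 'e"
  push  :: "'m \<Rightarrow> 'e \<Rightarrow> 'e"
  pull  :: "'m \<Rightarrow> 'e \<Rightarrow> 'e"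
  real  :: "'o \<Rightarrow> 'o \<Rightarrow> 'e \<Rightarrow> 'o \<Rightarrow> 'm \<Rightarrow> 'm \<Rightarrow> bool"

definition is_category :: "('o, 'm, 'e, 'z) extri_scheme \<Rightarrow> bool" where
  "is_category CC \<longleftrightarrow>
     (\<forall>X\<in>ob CC. idm CC X \<in> hom CC X X) \<and>
     (\<forall>X\<in>ob CC. \<forall>Y\<in>ob CC. \<forall>Z\<in>ob CC. \<forall>f\<in>hom CC X Y. \<forall>g\<in>hom CC Y Z.
         cmp CC g f \<in> hom CC X Z) \<and>
     (\<forall>W\<in>ob CC. \<forall>X\<in>ob CC. \<forall>Y\<in>ob CC. \<forall>Z\<in>ob CC.
       \<forall>f\<in>hom CC W X. \<forall>g\<in>hom CC X Y. \<forall>h\<in>hom CC Y Z.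
         cmp CC h (cmp CC g f) = cmp CC (cmp CC h g) f) \<and>
     (\<forall>X\<in>ob CC. \<forall>Y\<in>ob CC. \<forall>f\<in>hom CC X Y.
         cmp CC f (idm CC X) = f \<and> cmp CC (idm CC Y) f = f)"

definition is_preadditive :: "('o, 'm, 'e, 'z) extri_scheme \<Rightarrow> bool" where
  "is_preadditive CC \<longleftrightarrow>
     (\<forall>X\<in>ob CC. \<forall>Y\<in>ob CC.
        comm_group \<lparr>carrier = hom CC X Y, mult = madd CC, one = mzero CC X Y\<rparr>) \<and>
     (\<forall>X\<in>ob CC. \<forall>Y\<in>ob CC. \<forall>Z\<in>ob CC. \<forall>f\<in>hom CC X Y. \<forall>g\<in>hom CC Y Z. \<forall>g'\<in>hom CC Y Z.
         cmp CC (madd CC g g') f = madd CC (cmp CC g f) (cmp CC g' f)) \<and>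
     (\<forall>X\<in>ob CC. \<forall>Y\<in>ob CC. \<forall>Z\<in>ob CC. \<forall>f\<in>hom CC X Y. \<forall>f'\<in>hom CC X Y. \<forall>g\<in>hom CC Y Z.
         cmp CC g (madd CC f f') = madd CC (cmp CC g f) (cmp CC g f'))"

definition is_biproduct ::
  "('o, 'm, 'e, 'z) extri_scheme \<Rightarrow> 'o \<Rightarrow> 'o \<Rightarrow> 'o \<Rightarrow> 'm \<Rightarrow> 'm \<Rightarrow> 'm \<Rightarrow> 'm \<Rightarrow> bool" where
  "is_biproduct CC X Y S i1 i2 p1 p2 \<longleftrightarrow>
     X \<in> ob CC \<and> Y \<in> ob CC \<and> S \<in> ob CC \<and>
     i1 \<in> hom CC X S \<and> i2 \<in> hom CC Y S \<and> p1 \<in> hom CC S X \<and> p2 \<in> hom CC S Y \<and>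
     cmp CC p1 i1 = idm CC X \<and> cmp CC p2 i2 = idm CC Y \<and>
     cmp CC p1 i2 = mzero CC Y X \<and> cmp CC p2 i1 = mzero CC X Y \<and>
     madd CC (cmp CC i1 p1) (cmp CC i2 p2) = idm CC S"

definition is_additive :: "('o, 'm, 'e, 'z) extri_scheme \<Rightarrow> bool" where
  "is_additive CC \<longleftrightarrow> is_category CC \<and> is_preadditive CC \<and>
     (\<exists>Z\<in>ob CC. \<forall>X\<in>ob CC. (\<exists>!f. f \<in> hom CC Z X) \<and> (\<exists>!f. f \<in> hom CC X Z)) \<and>
     (\<forall>X\<in>ob CC. \<forall>Y\<in>ob CC. \<exists>S i1 i2 p1 p2. is_biproduct CC X Y S i1 i2 p1 p2)"

definition is_iso :: "('o, 'm, 'e, 'z) extri_scheme \<Rightarrow> 'o \<Rightarrow> 'o \<Rightarrow> 'm \<Rightarrow> bool" where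
  "is_iso CC X Y f \<longleftrightarrow> X \<in> ob CC \<and> Y \<in> ob CC \<and> f \<in> hom CC X Y \<and>
     (\<exists>g\<in>hom CC Y X. cmp CC g f = idm CC X \<and> cmp CC f g = idm CC Y)"

definition is_biadditive_E :: "('o, 'm, 'e, 'z) extri_scheme \<Rightarrow> bool" where
  "is_biadditive_E CC \<longleftrightarrow>
     (\<forall>C\<in>ob CC. \<forall>A\<in>ob CC.
        comm_group \<lparr>carrier = ext CC C A, mult = eadd CC, one = ezero CC C A\<rparr>) \<and>
     (\<forall>C\<in>ob CC. \<forall>A\<in>ob CC. \<forall>A'\<in>ob CC. \<forall>a\<in>hom CC A A'. \<forall>d\<in>ext CC C A.
        push CC a d \<in> ext CC C A') \<and>
     (\<forall>C\<in>ob CC. \<forall>C'\<in>ob CC. \<forall>A\<in>ob CC. \<forall>c\<in>hom CC C' C. \<forall>d\<in>ext CC C A.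
        pull CC c d \<in> ext CC C' A) \<and>
     (\<forall>C\<in>ob CC. \<forall>A\<in>ob CC. \<forall>d\<in>ext CC C A.
        push CC (idm CC A) d = d \<and> pull CC (idm CC C) d = d) \<and>
     (\<forall>C\<in>ob CC. \<forall>A\<in>ob CC. \<forall>A'\<in>ob CC. \<forall>A''\<in>ob CC. \<forall>a\<in>hom CC A A'. \<forall>b\<in>hom CC A' A''.
        \<forall>d\<in>ext CC C A. push CC (cmp CC b a) d = push CC b (push CC a d)) \<and>
     (\<forall>C\<in>ob CC. \<forall>C'\<in>ob CC. \<forall>C''\<in>ob CC. \<forall>A\<in>ob CC. \<forall>c\<in>hom CC C' C. \<forall>c'\<in>hom CC C'' C'.
        \<forall>d\<in>ext CC C A. pull CC (cmp CC c c') d = pull CC c' (pull CC c d)) \<and>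
     (\<forall>C\<in>ob CC. \<forall>C'\<in>ob CC. \<forall>A\<in>ob CC. \<forall>A'\<in>ob CC. \<forall>a\<in>hom CC A A'. \<forall>c\<in>hom CC C' C.
        \<forall>d\<in>ext CC C A. push CC a (pull CC c d) = pull CC c (push CC a d)) \<and>
     (\<forall>C\<in>ob CC. \<forall>A\<in>ob CC. \<forall>A'\<in>ob CC. \<forall>a\<in>hom CC A A'. \<forall>d\<in>ext CC C A. \<forall>d'\<in>ext CC C A.
        push CC a (eadd CC d d') = eadd CC (push CC a d) (push CC a d')) \<and>
     (\<forall>C\<in>ob CC. \<forall>C'\<in>ob CC. \<forall>A\<in>ob CC. \<forall>c\<in>hom CC C' C. \<forall>d\<in>ext CC C A. \<forall>d'\<in>ext CC C A.
        pull CC c (eadd CC d d') = eadd CC (pull CC c d) (pull CC c d')) \<and>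
     (\<forall>C\<in>ob CC. \<forall>A\<in>ob CC. \<forall>A'\<in>ob CC. \<forall>a\<in>hom CC A A'. \<forall>a'\<in>hom CC A A'. \<forall>d\<in>ext CC C A.
        push CC (madd CC a a') d = eadd CC (push CC a d) (push CC a' d)) \<and>
     (\<forall>C\<in>ob CC. \<forall>C'\<in>ob CC. \<forall>A\<in>ob CC. \<forall>c\<in>hom CC C' C. \<forall>c'\<in>hom CC C' C. \<forall>d\<in>ext CC C A.
        pull CC (madd CC c c') d = eadd CC (pull CC c d) (pull CC c' d))"

definition is_realization :: "('o, 'm, 'e, 'z) extri_scheme \<Rightarrow> bool" where
  "is_realization CC \<longleftrightarrow>
     (\<forall>C A d B x y. real CC C A d B x y \<longrightarrow>
        C \<in> ob CC \<and> A \<in> ob CC \<and> B \<in> ob CC \<and> d \<in> ext CC C A \<and>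
        x \<in> hom CC A B \<and> y \<in> hom CC B C) \<and>
     (\<forall>C\<in>ob CC. \<forall>A\<in>ob CC. \<forall>d\<in>ext CC C A. \<exists>B x y. real CC C A d B x y) \<and>
     (\<forall>C A d B x y B' x' y'. real CC C A d B x y \<longrightarrow>
        (real CC C A d B' x' y' \<longleftrightarrow>
          x' \<in> hom CC A B' \<and> y' \<in> hom CC B' C \<and>
          (\<exists>b. is_iso CC B B' b \<and> cmp CC b x = x' \<and> cmp CC y' b = y)))"

definition is_additive_realization :: "('o, 'm, 'e, 'z) extri_scheme \<Rightarrow> bool" where
  "is_additive_realization CC \<longleftrightarrow>
     \<comment> \<open>morphisms of extensions are realized\<close>
     (\<forall>C A d B x y C' A' d' B' x' y' a c.
        real CC C A d B x y \<and> real CC C' A' d' B' x' y' \<and>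
        a \<in> hom CC A A' \<and> c \<in> hom CC C C' \<and> push CC a d = pull CC c d' \<longrightarrow>
        (\<exists>b\<in>hom CC B B'. cmp CC b x = cmp CC x' a \<and> cmp CC y' b = cmp CC c y)) \<and>
     \<comment> \<open>s(0) is the split sequence\<close>
     (\<forall>A C S iA iC pA pC. is_biproduct CC A C S iA iC pA pC \<longrightarrow>
        real CC C A (ezero CC C A) S iA pC) \<and>
     \<comment> \<open>s(d \<oplus> d') = s(d) \<oplus> s(d')\<close>
     (\<forall>C A d B x y C' A' d' B' x' y' SA iA iA' pA pA' SB iB iB' pB pB' SC iC iC' pC pC' t.
        real CC C A d B x y \<and> real CC C' A' d' B' x' y' \<and>
        is_biproduct CC A A' SA iA iA' pA pA' \<and>
        is_biproduct CC B B' SB iB iB' pB pB' \<and>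
        is_biproduct CC C C' SC iC iC' pC pC' \<and>
        t \<in> ext CC SC SA \<and>
        pull CC iC (push CC pA t) = d \<and> pull CC iC' (push CC pA' t) = d' \<and>
        pull CC iC' (push CC pA t) = ezero CC C' A \<and> pull CC iC (push CC pA' t) = ezero CC C A'
        \<longrightarrow> real CC SC SA t SB
              (madd CC (cmp CC iB (cmp CC x pA)) (cmp CC iB' (cmp CC x' pA')))
              (madd CC (cmp CC iC (cmp CC y pB)) (cmp CC iC' (cmp CC y' pB'))))"

definition ET3 :: "('o, 'm, 'e, 'z) extri_scheme \<Rightarrow> bool" where
  "ET3 CC \<longleftrightarrow>
     (\<forall>C A d B x y C' A' d' B' x' y' a b.
        real CC C A d B x y \<and> real CC C' A' d' B' x' y' \<and>
        a \<in> hom CC A A' \<and> b \<in> hom CC B B' \<and> cmp CC b x = cmp CC x' a \<longrightarrow>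
        (\<exists>c\<in>hom CC C C'. cmp CC c y = cmp CC y' b \<and> push CC a d = pull CC c d'))"

definition ET3op :: "('o, 'm, 'e, 'z) extri_scheme \<Rightarrow> bool" where
  "ET3op CC \<longleftrightarrow>
     (\<forall>C A d B x y C' A' d' B' x' y' b c.
        real CC C A d B x y \<and> real CC C' A' d' B' x' y' \<and>
        b \<in> hom CC B B' \<and> c \<in> hom CC C C' \<and> cmp CC c y = cmp CC y' b \<longrightarrow>
        (\<exists>a\<in>hom CC A A'. cmp CC b x = cmp CC x' a \<and> push CC a d = pull CC c d'))"

definition ET4 :: "('o, 'm, 'e, 'z) extri_scheme \<Rightarrow> bool" where
  "ET4 CC \<longleftrightarrow>
     (\<forall>A B C D F d f f' d' g g'.
        real CC D A d B f f' \<and> real CC F B d' C g g' \<longrightarrow>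
        (\<exists>E h h' dd e d''. E \<in> ob CC \<and> dd \<in> hom CC D E \<and> e \<in> hom CC E F \<and>
           real CC E A d'' C h h' \<and>
           h = cmp CC g f \<and> cmp CC dd f' = cmp CC h' g \<and> cmp CC e h' = g' \<and>
           real CC F D (push CC f' d') E dd e \<and>
           pull CC dd d'' = d \<and> push CC f d'' = pull CC e d'))"

definition ET4op :: "('o, 'm, 'e, 'z) extri_scheme \<Rightarrow> bool" where
  "ET4op CC \<longleftrightarrow>
     (\<forall>A B C D F d f f' d' g g'.
        real CC B D d A f' f \<and> real CC C F d' B g' g \<longrightarrow>
        (\<exists>E h h' dd e d''. E \<in> ob CC \<and> dd \<in> hom CC D E \<and> e \<in> hom CC E F \<and>
           real CC C E d'' A h' h \<and>
           h = cmp CC g f \<and> cmp CC h' dd = f' \<and> cmp CC f h' = cmp CC g' e \<and>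
           real CC F D (pull CC g' d) E dd e \<and>
           d' = push CC e d'' \<and> push CC dd d = pull CC g d''))"

definition extriangulated :: "('o, 'm, 'e, 'z) extri_scheme \<Rightarrow> bool" where
  "extriangulated CC \<longleftrightarrow> is_additive CC \<and> is_biadditive_E CC \<and> is_realization CC \<and>
     is_additive_realization CC \<and> ET3 CC \<and> ET3op CC \<and> ET4 CC \<and> ET4op CC"

definition additive_subfunctor ::
  "('o, 'm, 'e, 'z) extri_scheme \<Rightarrow> ('o \<Rightarrow> 'o \<Rightarrow> 'e set) \<Rightarrow> bool" where
  "additive_subfunctor CC F \<longleftrightarrow>
     (\<forall>C\<in>ob CC. \<forall>A\<in>ob CC.
        subgroup (F C A) \<lparr>carrier = ext CC C A, mult = eadd CC, one = ezero CC C A\<rparr>) \<and>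
     (\<forall>C\<in>ob CC. \<forall>A\<in>ob CC. \<forall>A'\<in>ob CC. \<forall>a\<in>hom CC A A'. \<forall>d\<in>F C A.
        push CC a d \<in> F C A') \<and>
     (\<forall>C\<in>ob CC. \<forall>C'\<in>ob CC. \<forall>A\<in>ob CC. \<forall>c\<in>hom CC C' C. \<forall>d\<in>F C A.
        pull CC c d \<in> F C' A)"

definition F_triangle ::
  "('o, 'm, 'e, 'z) extri_scheme \<Rightarrow> ('o \<Rightarrow> 'o \<Rightarrow> 'e set) \<Rightarrow>
   'o \<Rightarrow> 'o \<Rightarrow> 'e \<Rightarrow> 'o \<Rightarrow> 'm \<Rightarrow> 'm \<Rightarrow> bool" where
  "F_triangle CC F C A d B x y \<longleftrightarrow> real CC C A d B x y \<and> d \<in> F C A"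

definition F_phantom ::
  "('o, 'm, 'e, 'z) extri_scheme \<Rightarrow> ('o \<Rightarrow> 'o \<Rightarrow> 'e set) \<Rightarrow> 'o \<Rightarrow> 'o \<Rightarrow> 'm \<Rightarrow> bool" where
  "F_phantom CC F X C phi \<longleftrightarrow> phi \<in> hom CC X C \<and>
     (\<forall>A\<in>ob CC. \<forall>d\<in>ext CC C A. pull CC phi d \<in> F X A)"

definition E_projective_morphism ::
  "('o, 'm, 'e, 'z) extri_scheme \<Rightarrow> 'o \<Rightarrow> 'o \<Rightarrow> 'm \<Rightarrow> bool" where
  "E_projective_morphism CC P C p \<longleftrightarrow> p \<in> hom CC P C \<and>
     (\<forall>A\<in>ob CC. \<forall>d\<in>ext CC C A. pull CC p d = ezero CC P A)"

end

theory Submission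
  imports Defs
begin

text \<open>
  Because p is E-projective, every extension d of C is a pushforward a_star gamma:
  p^star d = 0 makes p factor through the deflation realizing d, and (ET3)^op turns
  this factorization into a morphism a : K \<rightarrow> A with a_star gamma = d.
  Hence phi^star d = a_star (phi^star gamma), and stability of F under pushforward
  shows that phi^star gamma \<in> F already forces phi^star d \<in> F for all d.
\<close>

lemma category_id_hom: "is_category CC \<Longrightarrow> X \<in> ob CC \<Longrightarrow> idm CC X \<in> hom CC X X"
  unfolding is_category_def by blast

lemma category_cmp_hom: "is_category CC \<Longrightarrow> X \<in> ob CC \<Longrightarrow> Y \<in> ob CC \<Longrightarrow> Z \<in> ob CC \<Longrightarrow>
  f \<in> hom CC X Y \<Longrightarrow> g \<in> hom CC Y Z \<Longrightarrow> cmp CC g f \<in> hom CC X Z"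
  unfolding is_category_def by blast

lemma category_cmp_assoc: "is_category CC \<Longrightarrow> W \<in> ob CC \<Longrightarrow> X \<in> ob CC \<Longrightarrow> Y \<in> ob CC \<Longrightarrow>
  Z \<in> ob CC \<Longrightarrow> f \<in> hom CC W X \<Longrightarrow> g \<in> hom CC X Y \<Longrightarrow> h \<in> hom CC Y Z \<Longrightarrow>
  cmp CC h (cmp CC g f) = cmp CC (cmp CC h g) f"
  unfolding is_category_def by blast

lemma category_cmp_id_right: "is_category CC \<Longrightarrow> X \<in> ob CC \<Longrightarrow> Y \<in> ob CC \<Longrightarrow>
  f \<in> hom CC X Y \<Longrightarrow> cmp CC f (idm CC X) = f"
  unfolding is_category_def by blast

lemma category_cmp_id_left: "is_category CC \<Longrightarrow> X \<in> ob CC \<Longrightarrow> Y \<in> ob CC \<Longrightarrow>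
  f \<in> hom CC X Y \<Longrightarrow> cmp CC (idm CC Y) f = f"
  unfolding is_category_def by blast

lemma ext_zero_closed:
  assumes "is_biadditive_E CC" and "C \<in> ob CC" and "A \<in> ob CC"
  shows "ezero CC C A \<in> ext CC C A"
proof -
  have "comm_group \<lparr>carrier = ext CC C A, mult = eadd CC, one = ezero CC C A\<rparr>"
    using assms unfolding is_biadditive_E_def by (elim conjE) simp
  then show ?thesis
    using group.is_monoid[OF comm_group.axioms(2)] monoid.one_closed by fastforce
qed

lemma pull_closed: "is_biadditive_E CC \<Longrightarrow> C \<in> ob CC \<Longrightarrow> C' \<in> ob CC \<Longrightarrow> A \<in> ob CC \<Longrightarrow>
  c \<in> hom CC C' C \<Longrightarrow> d \<in> ext CC C A \<Longrightarrow> pull CC c d \<in> ext CC C' A"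
  unfolding is_biadditive_E_def by (elim conjE) blast

lemma push_id: "is_biadditive_E CC \<Longrightarrow> C \<in> ob CC \<Longrightarrow> A \<in> ob CC \<Longrightarrow>
  d \<in> ext CC C A \<Longrightarrow> push CC (idm CC A) d = d"
  unfolding is_biadditive_E_def by (elim conjE) simp

lemma pull_id: "is_biadditive_E CC \<Longrightarrow> C \<in> ob CC \<Longrightarrow> A \<in> ob CC \<Longrightarrow>
  d \<in> ext CC C A \<Longrightarrow> pull CC (idm CC C) d = d"
  unfolding is_biadditive_E_def by (elim conjE) simp

lemma push_pull_commute: "is_biadditive_E CC \<Longrightarrow> C \<in> ob CC \<Longrightarrow> C' \<in> ob CC \<Longrightarrow>
  A \<in> ob CC \<Longrightarrow> A' \<in> ob CC \<Longrightarrow> a \<in> hom CC A A' \<Longrightarrow> c \<in> hom CC C' C \<Longrightarrow>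
  d \<in> ext CC C A \<Longrightarrow> push CC a (pull CC c d) = pull CC c (push CC a d)"
  unfolding is_biadditive_E_def by (elim conjE) simp

lemma realization_exists: "is_realization CC \<Longrightarrow> C \<in> ob CC \<Longrightarrow> A \<in> ob CC \<Longrightarrow>
  d \<in> ext CC C A \<Longrightarrow> \<exists>B x y. real CC C A d B x y"
  unfolding is_realization_def by (elim conjE) blast

lemma realization_typed:
  assumes "is_realization CC" and "real CC C A d B x y"
  shows "C \<in> ob CC" "A \<in> ob CC" "B \<in> ob CC" "d \<in> ext CC C A"
    "x \<in> hom CC A B" "y \<in> hom CC B C"
  using assms(1)[unfolded is_realization_def, THEN conjunct1, rule_format, OF assms(2)] by auto

lemma additive_realization_morphism:
  "is_additive_realization CC \<Longrightarrow> real CC C A d B x y \<Longrightarrow> real CC C' A' d' B' x' y' \<Longrightarrow>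
   a \<in> hom CC A A' \<Longrightarrow> c \<in> hom CC C C' \<Longrightarrow> push CC a d = pull CC c d' \<Longrightarrow>
   \<exists>b\<in>hom CC B B'. cmp CC b x = cmp CC x' a \<and> cmp CC y' b = cmp CC c y"
  unfolding is_additive_realization_def by (elim conjE) blast

lemma additive_realization_split:
  "is_additive_realization CC \<Longrightarrow> is_biproduct CC A C S iA iC pA pC \<Longrightarrow>
   real CC C A (ezero CC C A) S iA pC"
  unfolding is_additive_realization_def by (elim conjE) simp

lemma ET3op_lift: "ET3op CC \<Longrightarrow> real CC C A d B x y \<Longrightarrow> real CC C' A' d' B' x' y' \<Longrightarrow>
  b \<in> hom CC B B' \<Longrightarrow> c \<in> hom CC C C' \<Longrightarrow> cmp CC c y = cmp CC y' b \<Longrightarrow>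
  \<exists>a\<in>hom CC A A'. cmp CC b x = cmp CC x' a \<and> push CC a d = pull CC c d'"
  unfolding ET3op_def by blast

text \<open>
  A morphism p with p^star d = 0 factors through the deflation y realizing d: the zero
  extension is realized by the split sequence A \<rightarrow> A \<oplus> P \<rightarrow> P, and (ET2) gives a
  morphism of triangles over p, whose restriction to P is the factorization.
\<close>
lemma factor_through_deflation:
  assumes E: "extriangulated CC"
    and r: "real CC C A d B x y"
    and P: "P \<in> ob CC" and p: "p \<in> hom CC P C"
    and kill: "pull CC p d = ezero CC P A"
  shows "\<exists>g\<in>hom CC P B. cmp CC y g = p"
proof -
  have cat: "is_category CC" and add: "is_additive CC" and bi: "is_biadditive_E CC"
    and re: "is_realization CC" and ar: "is_additive_realization CC"
    using E unfolding extriangulated_def is_additive_def by auto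
  note rt = realization_typed[OF re r]
  obtain S iA iP pA pP where bp: "is_biproduct CC A P S iA iP pA pP"
    using add rt(2) P unfolding is_additive_def by blast
  then have S: "S \<in> ob CC" and iP: "iP \<in> hom CC P S" and pP: "pP \<in> hom CC S P"
    and retract: "cmp CC pP iP = idm CC P"
    unfolding is_biproduct_def by auto
  have "push CC (idm CC A) (ezero CC P A) = pull CC p d"
    using push_id[OF bi P rt(2) ext_zero_closed[OF bi P rt(2)]] kill by simp
  then obtain b where b: "b \<in> hom CC S B" and yb: "cmp CC y b = cmp CC p pP"
    using additive_realization_morphism[OF ar additive_realization_split[OF ar bp] r
        category_id_hom[OF cat rt(2)] p] by blast
  have "cmp CC y (cmp CC b iP) = cmp CC (cmp CC y b) iP"
    using category_cmp_assoc[OF cat P S rt(3) rt(1) iP b rt(6)] .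
  also have "\<dots> = cmp CC p (cmp CC pP iP)"
    using yb category_cmp_assoc[OF cat P S P rt(1) iP pP p] by simp
  also have "\<dots> = p"
    using retract category_cmp_id_right[OF cat P rt(1) p] by simp
  finally show ?thesis
    using category_cmp_hom[OF cat P S rt(3) iP b] by blast
qed

lemma E_projective_extension_is_pushforward:
  assumes E: "extriangulated CC"
    and g: "real CC C K \<gamma> P i p"
    and proj: "E_projective_morphism CC P C p"
    and A: "A \<in> ob CC" and d: "d \<in> ext CC C A"
  shows "\<exists>a\<in>hom CC K A. push CC a \<gamma> = d"
proof -
  have cat: "is_category CC" and bi: "is_biadditive_E CC" and re: "is_realization CC"
    and e3: "ET3op CC"
    using E unfolding extriangulated_def is_additive_def by auto
  note gt = realization_typed[OF re g]
  obtain B x y where r: "real CC C A d B x y"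
    using realization_exists[OF re gt(1) A d] by blast
  have "pull CC p d = ezero CC P A"
    using proj A d unfolding E_projective_morphism_def by blast
  then obtain h where h: "h \<in> hom CC P B" and yh: "cmp CC y h = p"
    using factor_through_deflation[OF E r gt(3,6)] by blast
  have "cmp CC (idm CC C) p = cmp CC y h"
    using yh category_cmp_id_left[OF cat gt(3,1,6)] by simp
  then obtain a where "a \<in> hom CC K A" "push CC a \<gamma> = pull CC (idm CC C) d"
    using ET3op_lift[OF e3 g r h category_id_hom[OF cat gt(1)]] by blast
  then show ?thesis
    using pull_id[OF bi gt(1) A d] by auto
qed

lemma F_phantom_iff_pull_in_F:
  assumes bi: "is_biadditive_E CC" and F: "additive_subfunctor CC F"
    and C: "C \<in> ob CC" and K: "K \<in> ob CC" and \<gamma>: "\<gamma> \<in> ext CC C K"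
    and generates: "\<And>A d. A \<in> ob CC \<Longrightarrow> d \<in> ext CC C A \<Longrightarrow> \<exists>a\<in>hom CC K A. push CC a \<gamma> = d"
    and X: "X \<in> ob CC" and \<phi>: "\<phi> \<in> hom CC X C"
  shows "F_phantom CC F X C \<phi> \<longleftrightarrow> pull CC \<phi> \<gamma> \<in> F X K"
proof
  assume "F_phantom CC F X C \<phi>"
  then show "pull CC \<phi> \<gamma> \<in> F X K"
    using K \<gamma> unfolding F_phantom_def by blast
next
  assume \<gamma>F: "pull CC \<phi> \<gamma> \<in> F X K"
  have "pull CC \<phi> d \<in> F X A" if A: "A \<in> ob CC" and d: "d \<in> ext CC C A" for A d
  proof -
    obtain a where a: "a \<in> hom CC K A" and d_eq: "push CC a \<gamma> = d"
      using generates[OF A d] by blast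
    have "pull CC \<phi> d = push CC a (pull CC \<phi> \<gamma>)"
      using push_pull_commute[OF bi C X K A a \<phi> \<gamma>] d_eq by simp
    also have "\<dots> \<in> F X A"
      using F \<gamma>F a X K A unfolding additive_subfunctor_def by blast
    finally show ?thesis .
  qed
  then show "F_phantom CC F X C \<phi>"
    using \<phi> unfolding F_phantom_def by blast
qed

lemma in_F_iff_realizations_F_triangle:
  assumes re: "is_realization CC"
    and C: "C \<in> ob CC" and A: "A \<in> ob CC" and d: "d \<in> ext CC C A"
  shows "d \<in> F C A \<longleftrightarrow> (\<forall>B x y. real CC C A d B x y \<longrightarrow> F_triangle CC F C A d B x y)"
  using realization_exists[OF re C A d] unfolding F_triangle_def by blast

theorem lemma4p1:
  fixes CC :: "('o, 'm, 'e, 'z) extri_scheme"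
    and F :: "'o \<Rightarrow> 'o \<Rightarrow> 'e set"
  assumes "extriangulated CC"
    and "additive_subfunctor CC F"
    and "real CC C K \<gamma> P i p"
    and "E_projective_morphism CC P C p"
    and "X \<in> ob CC"
    and "\<phi> \<in> hom CC X C"
  shows "(F_phantom CC F X C \<phi> \<longleftrightarrow> pull CC \<phi> \<gamma> \<in> F X K) \<and>
         (F_phantom CC F X C \<phi> \<longleftrightarrow>
            (\<forall>Y u v. real CC X K (pull CC \<phi> \<gamma>) Y u v \<longrightarrow> F_triangle CC F X K (pull CC \<phi> \<gamma>) Y u v))"
proof -
  have bi: "is_biadditive_E CC" and re: "is_realization CC"
    using assms(1) unfolding extriangulated_def by auto
  note gt = realization_typed[OF re assms(3)]
  have phantom_iff: "F_phantom CC F X C \<phi> \<longleftrightarrow> pull CC \<phi> \<gamma> \<in> F X K"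
    using F_phantom_iff_pull_in_F[OF bi assms(2) gt(1,2,4) _ assms(5,6)]
      E_projective_extension_is_pushforward[OF assms(1,3,4)] by blast
  moreover have "pull CC \<phi> \<gamma> \<in> ext CC X K"
    using pull_closed[OF bi gt(1) assms(5) gt(2) assms(6) gt(4)] .
  ultimately show ?thesis
    using in_F_iff_realizations_F_triangle[OF re assms(5) gt(2)] by blast
qed

end
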